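(* Let $k\geq0$ and let $w,\bar w\in W_n$ both be increasing up to $k$ and have the same $k$-truncated A-code, with $\ell(w)=\ell(\bar w)+1$. Suppose that $v(\bar w)=s_iv(w)$ for some simple reflection $s_i$, $i\geq0$. Then $\bar w=s_iw$.
   Context: $W_n$ is the group of signed permutations $w=(w_1,\ldots,w_n)$ of $\{1,\ldots,n\}$; $\ell(w)=\#\{i<j\mid w_i>w_j\}+\sum_{w_i<0}|w_i|$. Left multiplication: for $i\geq1$, $s_iw$ is obtained by interchanging the values $i$ and $i+1$ (and $-i$ and $-(i+1)$) in $w$; $s_0w$ changes the sign of the entry equal to $\pm1$. $w$ is increasing up to $k$ if $0<w_1<\cdots<w_k$ (vacuous for $k=0$). The A-code is $\gamma_i:=\#\{j>i\mid w_j<w_i\}$ and the $k$-truncated A-code is $(\gamma_{k+1},\ldots,\gamma_n)$. $v(w)$ is the element obtained from $w$ by rearranging the entries $w_{k+1},\ldots,w_n$ in increasing order. *)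

theory Defs
  imports Main
begin

text \<open>A signed permutation w = (w_1,...,w_n) in W_n is represented as a list of
  integers of length n (0-indexed: w ! 0 = w_1) whose absolute values are 1..n.\<close>

definition signed_perm :: "nat \<Rightarrow> int list \<Rightarrow> bool" where
  "signed_perm n w \<longleftrightarrow> length w = n \<and> distinct (map abs w) \<and> abs ` set w = {1..int n}"

definition bLength :: "int list \<Rightarrow> nat" where
  "bLength w = card {(i, j). i < j \<and> j < length w \<and> w ! i > w ! j}
     + (\<Sum>i\<in>{i. i < length w \<and> w ! i < 0}. nat \<bar>w ! i\<bar>)"

text \<open>Left multiplication by the simple reflection s_i.\<close>
definition sval :: "nat \<Rightarrow> int \<Rightarrow> int" where
  "sval i x = (if i = 0 then (if \<bar>x\<bar> = 1 then - x else x)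
     else if x = int i then int i + 1
     else if x = int i + 1 then int i
     else if x = - int i then - (int i + 1)
     else if x = - (int i + 1) then - int i
     else x)"

definition sleft :: "nat \<Rightarrow> int list \<Rightarrow> int list" where
  "sleft i w = map (sval i) w"

definition incr_up_to :: "nat \<Rightarrow> int list \<Rightarrow> bool" where
  "incr_up_to k w \<longleftrightarrow> (\<forall>j < k. 0 < w ! j) \<and> (\<forall>j. Suc j < k \<longrightarrow> w ! j < w ! Suc j)"

text \<open>A-code gamma_i (0-indexed position i).\<close>
definition acode :: "int list \<Rightarrow> nat \<Rightarrow> nat" where
  "acode w i = card {j. i < j \<and> j < length w \<and> w ! j < w ! i}"

definition trunc_acode :: "nat \<Rightarrow> int list \<Rightarrow> nat list" where
  "trunc_acode k w = map (acode w) [k..<length w]"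

definition vk :: "nat \<Rightarrow> int list \<Rightarrow> int list" where
  "vk k w = take k w @ sort (drop k w)"

end

theory Submission
  imports Defs
begin

text \<open>On the first k positions the claim is read off directly from v(wb) = s_i v(w).
  On the tail, sorting commutes with s_i: the sorted tail of wb is the image under s_i
  of the sorted tail of w, so s_i is strictly increasing on the tail entries of w.
  Hence s_i w has the same tail entries as wb and the same truncated A-code as w, which
  is that of wb.  A list of distinct integers is determined by its set of entries and its
  A-code (the A-code of the head is its rank in the set), so the tails agree as well.\<close>

lemma sval_sval [simp]: "sval i (sval i x) = x"
  by (auto simp: sval_def)

lemma inj_sval: "inj (sval i)"
  by (metis injI sval_sval)

lemma card_less_eq_imp_eq:
  fixes a b :: "'a :: linorder"
  assumes "finite S" "a \<in> S" "b \<in> S" "card {y\<in>S. y < a} = card {y\<in>S. y < b}"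
  shows "a = b"
proof -
  have less: "card {y\<in>S. y < a} < card {y\<in>S. y < b}" if "a \<in> S" "a < b" for a b
    using that \<open>finite S\<close> by (intro psubset_card_mono) auto
  show ?thesis
    using less[of a b] less[of b a] assms by (metis less_irrefl linorder_neqE)
qed

lemma acode_Cons_Suc [simp]: "acode (x # xs) (Suc j) = acode xs j"
proof -
  have "{j'. Suc j < j' \<and> j' < length (x # xs) \<and> (x # xs) ! j' < (x # xs) ! Suc j}
      = Suc ` {j'. j < j' \<and> j' < length xs \<and> xs ! j' < xs ! j}"
    by (auto simp: image_iff less_Suc_eq_0_disj)
  then show ?thesis
    by (simp add: acode_def card_image)
qed

lemma acode_Cons_0:
  assumes "distinct xs"
  shows "acode (x # xs) 0 = card {y \<in> set (x # xs). y < x}"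
proof -
  have "{j. 0 < j \<and> j < length (x # xs) \<and> (x # xs) ! j < (x # xs) ! 0}
      = Suc ` {j. j < length xs \<and> xs ! j < x}"
    by (auto simp: image_iff gr0_conv_Suc)
  then have "acode (x # xs) 0 = length (filter (\<lambda>y. y < x) xs)"
    by (simp add: acode_def card_image length_filter_conv_card)
  also have "\<dots> = card {y \<in> set xs. y < x}"
    using assms by (simp add: distinct_length_filter Int_def conj_commute)
  also have "{y \<in> set xs. y < x} = {y \<in> set (x # xs). y < x}"
    by auto
  finally show ?thesis .
qed

lemma trunc_acode_Suc_Cons [simp]: "trunc_acode (Suc k) (x # xs) = trunc_acode k xs"
  by (simp add: trunc_acode_def map_Suc_upt[symmetric] comp_def del: upt_Suc)

lemma trunc_acode_0_Cons: "trunc_acode 0 (x # xs) = acode (x # xs) 0 # trunc_acode 0 xs"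
  by (simp add: trunc_acode_def upt_conv_Cons map_Suc_upt[symmetric] comp_def del: upt_Suc)

lemma trunc_acode_drop: "trunc_acode k xs = trunc_acode 0 (drop k xs)"
proof (induction xs arbitrary: k)
  case Nil
  then show ?case by (simp add: trunc_acode_def)
next
  case (Cons x xs)
  then show ?case by (cases k) simp_all
qed

lemma distinct_set_trunc_acode_unique:
  fixes xs ys :: "int list"
  assumes "distinct xs" "distinct ys" "set xs = set ys" "trunc_acode 0 xs = trunc_acode 0 ys"
  shows "xs = ys"
  using assms
proof (induction xs arbitrary: ys)
  case Nil
  then show ?case by simp
next
  case (Cons x xs)
  then obtain y ys' where ys: "ys = y # ys'"
    by (cases ys) auto
  define S where "S = set (x # xs)"
  have S_ys: "S = set (y # ys')"
    using Cons.prems(3) unfolding S_def ys .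
  have "card {z \<in> S. z < x} = card {z \<in> S. z < y}"
  proof -
    have "card {z \<in> S. z < x} = acode (x # xs) 0"
      using Cons.prems(1) by (simp add: acode_Cons_0 S_def)
    also have "\<dots> = acode (y # ys') 0"
      using Cons.prems(4) by (simp add: ys trunc_acode_0_Cons)
    also have "\<dots> = card {z \<in> S. z < y}"
      using Cons.prems(2) by (simp add: acode_Cons_0 S_ys ys)
    finally show ?thesis .
  qed
  moreover have "finite S" "x \<in> S"
    by (simp_all add: S_def)
  moreover have "y \<in> S"
    by (simp add: S_ys)
  ultimately have "x = y"
    using card_less_eq_imp_eq by blast
  moreover have "xs = ys'"
  proof (rule Cons.IH)
    show "distinct xs" "distinct ys'"
      using Cons.prems(1,2) by (simp_all add: ys)
    have "set xs = S - {x}"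
      using Cons.prems(1) unfolding S_def by auto
    moreover have "set ys' = S - {y}"
      using Cons.prems(2) unfolding S_ys ys by auto
    ultimately show "set xs = set ys'"
      using \<open>x = y\<close> by simp
    show "trunc_acode 0 xs = trunc_acode 0 ys'"
      using Cons.prems(4) by (simp add: ys trunc_acode_0_Cons)
  qed
  ultimately show ?case
    by (simp add: ys)
qed

lemma acode_map_strict_mono:
  assumes "strict_mono_on (set xs) f"
  shows "acode (map f xs) j = acode xs j"
proof -
  have "f (xs ! j') < f (xs ! j) \<longleftrightarrow> xs ! j' < xs ! j" if "j < j'" "j' < length xs" for j'
    using that by (intro strict_mono_on_less[OF assms]) auto
  then show ?thesis
    unfolding acode_def by (intro arg_cong[where f = card] Collect_cong) auto
qed

lemma trunc_acode_map_strict_mono: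
  "strict_mono_on (set xs) f \<Longrightarrow> trunc_acode k (map f xs) = trunc_acode k xs"
  by (simp add: trunc_acode_def acode_map_strict_mono)

lemma strict_mono_on_if_sorted_map_sort:
  assumes "inj_on f (set xs)" "sorted (map f (sort xs))"
  shows "strict_mono_on (set xs) f"
proof (rule strict_mono_onI)
  fix x y assume "x \<in> set xs" "y \<in> set xs" "x < y"
  then obtain a b where a: "a < length xs" "sort xs ! a = x" and b: "b < length xs" "sort xs ! b = y"
    by (metis in_set_conv_nth length_sort set_sort)
  have "a < b"
  proof (rule ccontr)
    assume "\<not> a < b"
    then have "y \<le> x"
      using a b sorted_nth_mono[OF sorted_sort, of b a xs] by simp
    with \<open>x < y\<close> show False by simp
  qed
  then have "f x \<le> f y"
    using a b sorted_nth_mono[OF assms(2), of a b] by simp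
  moreover have "f x \<noteq> f y"
    using assms(1) \<open>x \<in> set xs\<close> \<open>y \<in> set xs\<close> \<open>x < y\<close> by (auto dest: inj_onD)
  ultimately show "f x < f y" by simp
qed

theorem lemma10:
  fixes n k i :: nat and w wb :: "int list"
  assumes "signed_perm n w" and "signed_perm n wb"
    and "k \<le> n"
    and "incr_up_to k w" and "incr_up_to k wb"
    and "trunc_acode k w = trunc_acode k wb"
    and "bLength w = bLength wb + 1"
    and "i < n"
    and "vk k wb = sleft i (vk k w)"
  shows "wb = sleft i w"
proof -
  let ?s = "sval i"
  have len: "length w = n" "length wb = n" and dist: "distinct w" "distinct wb"
    using assms(1,2) by (auto simp: signed_perm_def distinct_map)
  have "take k wb @ sort (drop k wb) = map ?s (take k w) @ map ?s (sort (drop k w))"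
    using assms(9) by (simp add: vk_def sleft_def)
  then have head: "take k wb = take k (map ?s w)"
    and tail_sorted: "sort (drop k wb) = map ?s (sort (drop k w))"
    using len assms(3) by (simp_all add: append_eq_append_conv take_map)
  have "sorted (map ?s (sort (drop k w)))"
    using sorted_sort[of "drop k wb"] by (simp only: tail_sorted)
  then have mono: "strict_mono_on (set (drop k w)) ?s"
    by (intro strict_mono_on_if_sorted_map_sort inj_on_subset[OF inj_sval subset_UNIV])
  have "drop k wb = drop k (map ?s w)"
  proof (rule distinct_set_trunc_acode_unique)
    show "distinct (drop k wb)" "distinct (drop k (map ?s w))"
      using dist by (simp_all add: distinct_drop drop_map distinct_map inj_on_subset[OF inj_sval])
    show "set (drop k wb) = set (drop k (map ?s w))"
      using arg_cong[OF tail_sorted, of set] by (simp add: drop_map)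
    show "trunc_acode 0 (drop k wb) = trunc_acode 0 (drop k (map ?s w))"
      using assms(6) mono
      by (simp add: trunc_acode_drop[symmetric] drop_map trunc_acode_map_strict_mono)
  qed
  with head show ?thesis
    by (metis append_take_drop_id sleft_def)
qed

end
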